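(* There is a weight-halving bijection from $[\mathcal{D}_{o}\times\mathcal{D}_{o}\times\mathcal{D}\times\mathcal{D}]_{\mathsf{even}}$ to $\mathcal{D}_{o}\times\mathcal{D}_{o}\times\mathcal{D}_{o}\times\mathcal{D}_{o}\times\mathcal{D}\times\mathcal{D}\times\mathcal{D}\times\mathcal{D}$. As a consequence, the numbers $P_{1^{-4}2^{6}4^{-2}}(n)$ defined by $\sum_{n\ge0}P_{1^{-4}2^{6}4^{-2}}(n)q^n=\frac{f_2^6}{f_1^4f_4^2}$ form a $2$-convolutive sequence, i.e. $\sum_{n\ge0}P_{1^{-4}2^{6}4^{-2}}(2n)q^n=\big(\sum_{n\ge0}P_{1^{-4}2^{6}4^{-2}}(n)q^n\big)^2$.
   Context: A partition is a non-increasing finite sequence of positive integers (parts); its weight is the sum of its parts. $\mathcal{D}$ denotes the set of partitions into distinct parts, and $\mathcal{D}_{o}$ the set of partitions into distinct odd parts. The weight of a tuple of partitions is the sum of the weights of its components. For a set $\mathcal{U}$ of weighted objects, $[\mathcal{U}]_{\mathsf{even}}$ is the subset of members of even weight. A bijection is weight-halving if the weight of the image is half the weight of the object. $f_i:=(q^i;q^i)_\infty=\prod_{k\ge1}(1-q^{ik})$. A sequence $(a_n)_{n\ge0}$ is $m$-convolutive if $\sum_{n\ge0}a_{mn}q^n=\big(\sum_{n\ge0}a_nq^n\big)^m$. *)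

theory Defs
  imports "HOL-Computational_Algebra.Formal_Power_Series"
begin

text \<open>A partition is represented as a list of its parts in non-increasing order.
  Partitions into distinct parts are strictly decreasing lists of positive integers.\<close>

definition is_partition :: "nat list \<Rightarrow> bool" where
  "is_partition xs \<longleftrightarrow> sorted_wrt (\<ge>) xs \<and> (\<forall>x\<in>set xs. 0 < x)"

definition weight :: "nat list \<Rightarrow> nat" where
  "weight xs = sum_list xs"

definition D :: "nat list set" where
  "D = {xs. is_partition xs \<and> distinct xs}"

definition Do :: "nat list set" where
  "Do = {xs. xs \<in> D \<and> (\<forall>x\<in>set xs. odd x)}"

definition weight4 :: "nat list \<times> nat list \<times> nat list \<times> nat list \<Rightarrow> nat" where
  "weight4 t = (case t of (a,b,c,d) \<Rightarrow> weight a + weight b + weight c + weight d)"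

definition weight8 :: "nat list \<times> nat list \<times> nat list \<times> nat list \<times>
                       nat list \<times> nat list \<times> nat list \<times> nat list \<Rightarrow> nat" where
  "weight8 t = (case t of (a,b,c,d,e,f,g,h) \<Rightarrow>
     weight a + weight b + weight c + weight d + weight e + weight f + weight g + weight h)"

definition Src :: "(nat list \<times> nat list \<times> nat list \<times> nat list) set" where
  "Src = {t. t \<in> Do \<times> Do \<times> D \<times> D \<and> even (weight4 t)}"

definition Tgt :: "(nat list \<times> nat list \<times> nat list \<times> nat list \<times>
                    nat list \<times> nat list \<times> nat list \<times> nat list) set" where
  "Tgt = Do \<times> Do \<times> Do \<times> Do \<times> D \<times> D \<times> D \<times> D"

text \<open>f_i = prod_{k>=1} (1 - q^{ik}) as a formal power series; for i >= 1 its n-th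
  coefficient equals that of the finite product over k = 1..n.\<close>
definition f_fps :: "nat \<Rightarrow> rat fps" where
  "f_fps i = Abs_fps (\<lambda>n. fps_nth (\<Prod>k\<in>{1..n}. (1 - fps_X ^ (i * k))) n)"

definition P_seq :: "nat \<Rightarrow> rat" where
  "P_seq n = fps_nth (f_fps 2 ^ 6 / (f_fps 1 ^ 4 * f_fps 4 ^ 2)) n"

end

theory Submission
  imports Defs "HOL-Library.Disjoint_Sets"
begin

unbundle fps_syntax

text \<open>Both claims come down to the even part \<open>\<Sum>\<^sub>n P(2n) q\<^sup>n\<close> of
  \<open>F = f\<^sub>2\<^sup>6 / (f\<^sub>1\<^sup>4 f\<^sub>4\<^sup>2)\<close> being \<open>F\<^sup>2\<close>. Euler's product identities give
  \<open>F = (-q; q\<^sup>2)\<^sub>\<infinity>\<^sup>2 (-q; q)\<^sub>\<infinity>\<^sup>2\<close>, the generating function of \<open>Do \<times> Do \<times> D \<times> D\<close>, so \<open>F\<^sup>2\<close> is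
  that of the target, and equal counts in every weight give the weight-halving bijection.

  By Gauss's identity \<open>f\<^sub>2 (-s q; q\<^sup>2)\<^sub>\<infinity>\<^sup>2 = \<phi>(s q)\<close>, a limit of the finite Jacobi triple
  product, \<open>F = \<phi>(q) / \<phi>(-q)\<close>. The map \<open>(a, b) \<mapsto> (a + b, a - b)\<close> on representations as sums of
  two squares shows that \<open>\<phi>(q)\<^sup>2\<close> equals its own even part and that
  \<open>\<phi>(q) \<phi>(-q) = \<phi>(-q\<^sup>2)\<^sup>2\<close>. Hence \<open>F = \<phi>(q)\<^sup>2 / \<phi>(-q\<^sup>2)\<^sup>2\<close> has even part
  \<open>\<phi>(q)\<^sup>2 / \<phi>(-q)\<^sup>2 = F\<^sup>2\<close>.\<close>

definition fps_eq_upto :: "nat \<Rightarrow> 'a fps \<Rightarrow> 'a fps \<Rightarrow> bool" where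
  "fps_eq_upto m A B \<longleftrightarrow> (\<forall>i\<le>m. A $ i = B $ i)"

lemma fps_eq_upto_refl [simp]: "fps_eq_upto m A A"
  by (simp add: fps_eq_upto_def)

lemma fps_eq_upto_sym: "fps_eq_upto m A B \<Longrightarrow> fps_eq_upto m B A"
  by (simp add: fps_eq_upto_def)

lemma fps_eq_upto_trans: "fps_eq_upto m A B \<Longrightarrow> fps_eq_upto m B C \<Longrightarrow> fps_eq_upto m A C"
  by (simp add: fps_eq_upto_def)

lemma fps_eq_upto_mono: "fps_eq_upto m A B \<Longrightarrow> n \<le> m \<Longrightarrow> fps_eq_upto n A B"
  by (simp add: fps_eq_upto_def)

lemma fps_eq_upto_imp_eq: "(\<And>m. fps_eq_upto m A B) \<Longrightarrow> A = B"
  by (auto simp: fps_eq_upto_def fps_eq_iff)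

lemma fps_eq_upto_mult:
  fixes A B A' B' :: "'a::comm_semiring_1 fps"
  assumes "fps_eq_upto m A B" "fps_eq_upto m A' B'"
  shows "fps_eq_upto m (A * A') (B * B')"
  using assms unfolding fps_eq_upto_def fps_mult_nth by (auto intro!: sum.cong)

lemma fps_eq_upto_sum:
  "(\<And>k. k \<in> K \<Longrightarrow> fps_eq_upto m (f k) (g k)) \<Longrightarrow> fps_eq_upto m (\<Sum>k\<in>K. f k) (\<Sum>k\<in>K. g k)"
  by (simp add: fps_eq_upto_def fps_sum_nth)

lemma fps_eq_upto_prod:
  fixes f g :: "'b \<Rightarrow> 'a::comm_semiring_1 fps"
  shows "(\<And>k. k \<in> K \<Longrightarrow> fps_eq_upto m (f k) (g k)) \<Longrightarrow>
    fps_eq_upto m (\<Prod>k\<in>K. f k) (\<Prod>k\<in>K. g k)"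
  by (induction K rule: infinite_finite_induct) (auto intro: fps_eq_upto_mult)

lemma fps_eq_upto_power:
  fixes A B :: "'a::comm_semiring_1 fps"
  shows "fps_eq_upto m A B \<Longrightarrow> fps_eq_upto m (A ^ n) (B ^ n)"
  by (induction n) (auto intro: fps_eq_upto_mult)

lemma fps_eq_upto_inverse:
  fixes A B :: "'a::field fps"
  assumes AB: "fps_eq_upto m A B" and A0: "A $ 0 \<noteq> 0"
  shows "fps_eq_upto m (inverse A) (inverse B)"
proof -
  have "B $ 0 \<noteq> 0" using AB A0 by (simp add: fps_eq_upto_def)
  then have 1: "inverse A = (inverse A * B) * inverse B"
    by (simp add: mult.assoc inverse_mult_eq_1')
  have "fps_eq_upto m ((inverse A * B) * inverse B) ((inverse A * A) * inverse B)"
    by (intro fps_eq_upto_mult fps_eq_upto_sym[OF AB] fps_eq_upto_refl)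
  moreover have "inverse A * A = 1" using A0 by (rule inverse_mult_eq_1)
  ultimately show ?thesis by (simp only: 1[symmetric] mult_1_left)
qed

lemma fps_eq_upto_X_power_mult:
  fixes A :: "'a::comm_semiring_1 fps"
  shows "m < e \<Longrightarrow> fps_eq_upto m (fps_X ^ e * A) 0"
  by (auto simp: fps_eq_upto_def fps_X_power_mult_nth)

lemma fps_eq_upto_one_plus_X_power:
  fixes c :: "'a::comm_ring_1 fps"
  shows "m < e \<Longrightarrow> fps_eq_upto m (1 + c * fps_X ^ e) 1"
  by (auto simp: fps_eq_upto_def fps_X_power_mult_right_nth)

text \<open>This is the limit of the partial products when \<open>g k\<close> agrees with \<open>1\<close> below degree \<open>k\<close>.\<close>

definition fps_infprod :: "(nat \<Rightarrow> 'a::comm_semiring_1 fps) \<Rightarrow> 'a fps" where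
  "fps_infprod g = Abs_fps (\<lambda>n. (\<Prod>k\<in>{1..n}. g k) $ n)"

lemma fps_eq_upto_prod_initial:
  fixes g :: "nat \<Rightarrow> 'a::comm_semiring_1 fps"
  assumes g: "\<And>k. 0 < k \<Longrightarrow> fps_eq_upto (k - 1) (g k) 1" and "i \<le> N"
  shows "fps_eq_upto i (\<Prod>k\<in>{1..N}. g k) (\<Prod>k\<in>{1..i}. g k)"
proof -
  have "{1..N} = {1..i} \<union> {i+1..N}" using \<open>i \<le> N\<close> by auto
  then have "(\<Prod>k\<in>{1..N}. g k) = (\<Prod>k\<in>{1..i}. g k) * (\<Prod>k\<in>{i+1..N}. g k)"
    by (simp add: prod.union_disjoint)
  moreover have "fps_eq_upto i (\<Prod>k\<in>{i+1..N}. g k) (\<Prod>k\<in>{i+1..N}. 1)"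
  proof (rule fps_eq_upto_prod)
    fix k assume "k \<in> {i+1..N}"
    then show "fps_eq_upto i (g k) 1" using fps_eq_upto_mono[OF g[of k], of i] by auto
  qed
  ultimately show ?thesis
    using fps_eq_upto_mult[OF fps_eq_upto_refl] by fastforce
qed

lemma fps_infprod_eq_upto:
  fixes g :: "nat \<Rightarrow> 'a::comm_semiring_1 fps"
  assumes "\<And>k. 0 < k \<Longrightarrow> fps_eq_upto (k - 1) (g k) 1" and "m \<le> N"
  shows "fps_eq_upto m (fps_infprod g) (\<Prod>k\<in>{1..N}. g k)"
  using fps_eq_upto_prod_initial[OF assms(1)] assms(2)
  by (fastforce simp: fps_eq_upto_def fps_infprod_def)

definition fps_even_part :: "'a::zero fps \<Rightarrow> 'a fps" where
  "fps_even_part A = Abs_fps (\<lambda>n. A $ (2 * n))"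

definition fps_dilate2 :: "'a::zero fps \<Rightarrow> 'a fps" where
  "fps_dilate2 B = Abs_fps (\<lambda>n. if even n then B $ (n div 2) else 0)"

lemma fps_even_part_mult_dilate2:
  fixes A B :: "'a::comm_semiring_1 fps"
  shows "fps_even_part (A * fps_dilate2 B) = fps_even_part A * B"
proof (rule fps_ext)
  fix n
  define f where "f i = A $ i * fps_dilate2 B $ (2 * n - i)" for i
  have "f i = 0" if "i \<in> {0..2 * n} - (\<lambda>j. 2 * j) ` {0..n}" for i
  proof -
    have "odd i" using that by (auto elim!: evenE)
    then have "odd (2 * n - i)" using that by auto
    then show ?thesis by (simp add: f_def fps_dilate2_def)
  qed
  then have "(\<Sum>i=0..2 * n. f i) = (\<Sum>i\<in>(\<lambda>j. 2 * j) ` {0..n}. f i)"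
    by (intro sum.mono_neutral_right) auto
  also have "\<dots> = (\<Sum>j=0..n. A $ (2 * j) * B $ (n - j))"
    by (simp add: sum.reindex inj_on_def f_def fps_dilate2_def flip: diff_mult_distrib2)
  finally show "fps_even_part (A * fps_dilate2 B) $ n = (fps_even_part A * B) $ n"
    by (simp add: fps_even_part_def fps_mult_nth f_def)
qed

definition weight_gf :: "'a set \<Rightarrow> ('a \<Rightarrow> nat) \<Rightarrow> rat fps" where
  "weight_gf S w = Abs_fps (\<lambda>n. of_nat (card {x \<in> S. w x = n}))"

definition finite_fibres :: "'a set \<Rightarrow> ('a \<Rightarrow> nat) \<Rightarrow> bool" where
  "finite_fibres S w \<longleftrightarrow> (\<forall>n. finite {x \<in> S. w x = n})"

definition pair_weight :: "('a \<Rightarrow> nat) \<Rightarrow> ('b \<Rightarrow> nat) \<Rightarrow> 'a \<times> 'b \<Rightarrow> nat" where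
  "pair_weight w1 w2 p = w1 (fst p) + w2 (snd p)"

lemma fibre_Times_pair_weight:
  "{p \<in> S \<times> T. pair_weight w1 w2 p = n} =
    (\<Union>i\<in>{0..n}. {x \<in> S. w1 x = i} \<times> {y \<in> T. w2 y = n - i})"
  by (auto simp: pair_weight_def)

lemma finite_fibres_Times:
  "finite_fibres S w1 \<Longrightarrow> finite_fibres T w2 \<Longrightarrow> finite_fibres (S \<times> T) (pair_weight w1 w2)"
  unfolding finite_fibres_def fibre_Times_pair_weight by auto

lemma weight_gf_Times:
  assumes "finite_fibres S w1" "finite_fibres T w2"
  shows "weight_gf (S \<times> T) (pair_weight w1 w2) = weight_gf S w1 * weight_gf T w2"
proof (rule fps_ext)
  fix n
  have "card {p \<in> S \<times> T. pair_weight w1 w2 p = n} =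
      (\<Sum>i=0..n. card ({x \<in> S. w1 x = i} \<times> {y \<in> T. w2 y = n - i}))"
    unfolding fibre_Times_pair_weight
    by (rule card_UN_disjoint) (use assms in \<open>auto simp: finite_fibres_def\<close>)
  then show "weight_gf (S \<times> T) (pair_weight w1 w2) $ n = (weight_gf S w1 * weight_gf T w2) $ n"
    by (simp add: weight_gf_def fps_mult_nth card_cartesian_product)
qed

lemma weight_halving_bij_exists:
  assumes "finite_fibres S ws" "finite_fibres T wt"
    and even: "\<And>x. x \<in> S \<Longrightarrow> even (ws x)"
    and card: "\<And>n. card {x \<in> S. ws x = 2 * n} = card {y \<in> T. wt y = n}"
  shows "\<exists>\<phi>. bij_betw \<phi> S T \<and> (\<forall>x\<in>S. 2 * wt (\<phi> x) = ws x)"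
proof -
  have "\<forall>n. \<exists>b. bij_betw b {x \<in> S. ws x = 2 * n} {y \<in> T. wt y = n}"
    using assms by (auto simp: finite_fibres_def intro: finite_same_card_bij)
  then obtain b where b: "\<And>n. bij_betw (b n) {x \<in> S. ws x = 2 * n} {y \<in> T. wt y = n}"
    by metis
  define \<phi> where "\<phi> x = b (ws x div 2) x" for x
  have "bij_betw \<phi> {x \<in> S. ws x = 2 * n} {y \<in> T. wt y = n}" for n
    using b[of n] by (rule bij_betw_cong[THEN iffD1, rotated]) (simp add: \<phi>_def)
  then have "bij_betw \<phi> (\<Union>n. {x \<in> S. ws x = 2 * n}) (\<Union>n. {y \<in> T. wt y = n})"
    by (intro bij_betw_UNION_disjoint) (auto simp: disjoint_family_on_def)
  moreover have "(\<Union>n. {x \<in> S. ws x = 2 * n}) = S" "(\<Union>n. {y \<in> T. wt y = n}) = T"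
    using even by blast+
  moreover have "\<forall>x\<in>S. 2 * wt (\<phi> x) = ws x"
    using even bij_betwE[OF b] by (fastforce simp: \<phi>_def)
  ultimately show ?thesis by auto
qed

lemma finite_fibres_subset:
  assumes "finite_fibres S w" "T \<subseteq> S"
  shows "finite_fibres T w"
  unfolding finite_fibres_def
proof
  fix n
  have "{x \<in> T. w x = n} \<subseteq> {x \<in> S. w x = n}" using assms(2) by blast
  then show "finite {x \<in> T. w x = n}"
    using assms(1) finite_subset unfolding finite_fibres_def by blast
qed

lemma fps_even_part_weight_gf_even:
  "fps_even_part (weight_gf {x \<in> S. even (w x)} w) = fps_even_part (weight_gf S w)"
  by (auto simp: fps_eq_iff fps_even_part_def weight_gf_def intro!: arg_cong[where f = card])

lemma weight_halving_bij_exists_if_gf: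
  assumes "finite_fibres S ws" "finite_fibres T wt" "\<And>x. x \<in> S \<Longrightarrow> even (ws x)"
    and "fps_even_part (weight_gf S ws) = weight_gf T wt"
  shows "\<exists>\<phi>. bij_betw \<phi> S T \<and> (\<forall>x\<in>S. 2 * wt (\<phi> x) = ws x)"
proof (rule weight_halving_bij_exists[OF assms(1-3)])
  fix n
  have "(of_nat (card {x \<in> S. ws x = 2 * n}) :: rat) = of_nat (card {y \<in> T. wt y = n})"
    using arg_cong[where f = "\<lambda>F. F $ n", OF assms(4)]
    by (simp add: fps_even_part_def weight_gf_def)
  then show "card {x \<in> S. ws x = 2 * n} = card {y \<in> T. wt y = n}"
    by (simp only: of_nat_eq_iff)
qed

section \<open>Partitions into distinct parts\<close>

definition distinct_partitions :: "nat set \<Rightarrow> nat list set" where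
  "distinct_partitions A = {xs. sorted_wrt (>) xs \<and> set xs \<subseteq> A}"

definition subsets_with_sum :: "nat set \<Rightarrow> nat \<Rightarrow> nat set set" where
  "subsets_with_sum A n = {S. S \<subseteq> A \<and> finite S \<and> \<Sum>S = n}"

lemma sorted_wrt_ge_distinct_iff: "sorted_wrt (\<ge>) xs \<and> distinct xs \<longleftrightarrow> sorted_wrt (>) (xs::nat list)"
  by (induction xs) (auto simp: order.order_iff_strict)

lemma D_eq_distinct_partitions: "D = distinct_partitions {k. 0 < k}"
  unfolding D_def distinct_partitions_def is_partition_def
  using sorted_wrt_ge_distinct_iff by blast

lemma Do_eq_distinct_partitions: "Do = distinct_partitions {k. odd k}"
  unfolding Do_def D_def distinct_partitions_def is_partition_def
  using sorted_wrt_ge_distinct_iff by (auto dest: odd_pos)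

lemma bij_betw_set_distinct_partitions:
  "bij_betw set {xs \<in> distinct_partitions A. weight xs = n} (subsets_with_sum A n)"
proof (rule bij_betw_imageI)
  show "inj_on set {xs \<in> distinct_partitions A. weight xs = n}"
  proof (rule inj_onI)
    fix xs ys assume "xs \<in> {xs \<in> distinct_partitions A. weight xs = n}"
      "ys \<in> {xs \<in> distinct_partitions A. weight xs = n}" "set xs = set ys"
    then have "rev xs = rev ys"
      by (intro sorted_distinct_set_unique)
        (auto simp: distinct_partitions_def sorted_wrt_rev
          simp flip: sorted_wrt_ge_distinct_iff)
    then show "xs = ys" by simp
  qed
  show "set ` {xs \<in> distinct_partitions A. weight xs = n} = subsets_with_sum A n"
  proof (intro set_eqI iffI)
    fix S assume "S \<in> set ` {xs \<in> distinct_partitions A. weight xs = n}"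
    then obtain xs where "xs \<in> distinct_partitions A" "weight xs = n" "S = set xs" by auto
    moreover have "distinct xs"
      using \<open>xs \<in> distinct_partitions A\<close>
      by (auto simp: distinct_partitions_def simp flip: sorted_wrt_ge_distinct_iff)
    ultimately show "S \<in> subsets_with_sum A n"
      by (auto simp: subsets_with_sum_def distinct_partitions_def weight_def
          distinct_sum_list_conv_Sum)
  next
    fix S assume S: "S \<in> subsets_with_sum A n"
    then have "rev (sorted_list_of_set S) \<in> {xs \<in> distinct_partitions A. weight xs = n}"
      by (auto simp: distinct_partitions_def subsets_with_sum_def sorted_wrt_rev weight_def
          distinct_sum_list_conv_Sum)
    moreover have "set (rev (sorted_list_of_set S)) = S"
      using S by (simp add: subsets_with_sum_def)
    ultimately show "S \<in> set ` {xs \<in> distinct_partitions A. weight xs = n}"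
      by (metis image_eqI)
  qed
qed

lemma subsets_with_sum_subset_atMost: "subsets_with_sum A n \<subseteq> Pow {..n}"
proof
  fix S assume "S \<in> subsets_with_sum A n"
  then show "S \<in> Pow {..n}"
    using member_le_sum[of _ S id] by (auto simp: subsets_with_sum_def)
qed

lemma finite_fibres_distinct_partitions: "finite_fibres (distinct_partitions A) weight"
  unfolding finite_fibres_def
  using bij_betw_finite[OF bij_betw_set_distinct_partitions]
    finite_subset[OF subsets_with_sum_subset_atMost] by blast

lemma subsets_with_sum_eq_Pow:
  assumes "0 \<notin> A" "A \<inter> {1..n} \<subseteq> K" "K \<subseteq> A" "finite K"
  shows "subsets_with_sum A n = {S \<in> Pow K. \<Sum>S = n}"
proof -
  have "S \<subseteq> K" if "S \<in> subsets_with_sum A n" for S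
  proof
    fix x assume "x \<in> S"
    moreover have "S \<subseteq> A" "S \<subseteq> {..n}"
      using that subsets_with_sum_subset_atMost by (auto simp: subsets_with_sum_def)
    ultimately have "x \<in> A \<inter> {1..n}"
      using assms(1) by (cases x) auto
    then show "x \<in> K" using assms(2) by blast
  qed
  then show ?thesis
    using assms(3,4) by (auto simp: subsets_with_sum_def intro: finite_subset)
qed

lemma prod_one_plus_X_power_nth:
  assumes "finite K"
  shows "(\<Prod>k\<in>K. 1 + fps_X ^ k :: 'a::comm_semiring_1 fps) $ n = of_nat (card {S \<in> Pow K. \<Sum>S = n})"
proof -
  have "(\<Prod>k\<in>K. 1 + fps_X ^ k :: 'a fps) = (\<Sum>S\<in>Pow K. fps_X ^ (\<Sum>S))"
    using prod_add[OF assms, of "\<lambda>k. fps_X ^ k" "\<lambda>_. 1"]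
    by (simp add: add.commute power_sum)
  then have "(\<Prod>k\<in>K. 1 + fps_X ^ k :: 'a fps) $ n = (\<Sum>S\<in>Pow K. if \<Sum>S = n then 1 else 0)"
    by (simp add: fps_sum_nth fps_X_power_nth eq_commute)
  also have "\<dots> = of_nat (card {S \<in> Pow K. \<Sum>S = n})"
    using assms by (simp add: sum.If_cases Int_def Pow_def)
  finally show ?thesis .
qed

lemma weight_gf_distinct_partitions_nth:
  assumes "0 \<notin> A" "A \<inter> {1..n} \<subseteq> K" "K \<subseteq> A" "finite K"
  shows "weight_gf (distinct_partitions A) weight $ n = (\<Prod>k\<in>K. 1 + fps_X ^ k) $ n"
  using bij_betw_same_card[OF bij_betw_set_distinct_partitions]
  by (simp add: weight_gf_def prod_one_plus_X_power_nth subsets_with_sum_eq_Pow[OF assms] assms(4))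

text \<open>In \<open>q\<close>-Pochhammer notation, \<open>odd_plus_prod s = (-s q; q\<^sup>2)\<^sub>\<infinity>\<close> and
  \<open>plus_prod = (-q; q)\<^sub>\<infinity>\<close>.\<close>

definition odd_plus_prod :: "rat \<Rightarrow> rat fps" where
  "odd_plus_prod s = fps_infprod (\<lambda>k. 1 + fps_const s * fps_X ^ (2 * k - 1))"

definition plus_prod :: "rat fps" where
  "plus_prod = fps_infprod (\<lambda>k. 1 + fps_X ^ k)"

lemma odd_plus_prod_eq_upto:
  "m \<le> N \<Longrightarrow> fps_eq_upto m (odd_plus_prod s) (\<Prod>k\<in>{1..N}. 1 + fps_const s * fps_X ^ (2 * k - 1))"
  unfolding odd_plus_prod_def
  by (rule fps_infprod_eq_upto) (auto intro: fps_eq_upto_one_plus_X_power)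

lemma plus_prod_eq_upto: "m \<le> N \<Longrightarrow> fps_eq_upto m plus_prod (\<Prod>k\<in>{1..N}. 1 + fps_X ^ k)"
  unfolding plus_prod_def
  by (rule fps_infprod_eq_upto) (auto intro: fps_eq_upto_one_plus_X_power[where c = 1, simplified])

lemma weight_gf_D: "weight_gf D weight = plus_prod"
proof (rule fps_ext)
  fix n :: nat
  have "weight_gf D weight $ n = (\<Prod>k\<in>{1..n}. 1 + fps_X ^ k) $ n"
    unfolding D_eq_distinct_partitions by (intro weight_gf_distinct_partitions_nth) auto
  then show "weight_gf D weight $ n = plus_prod $ n"
    by (simp add: plus_prod_def fps_infprod_def)
qed

lemma weight_gf_Do: "weight_gf Do weight = odd_plus_prod 1"
proof (rule fps_ext)
  fix n :: nat
  have "{k. odd k} \<inter> {1..n} \<subseteq> (\<lambda>k. 2 * k - 1) ` {1..n}"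
  proof
    fix x assume "x \<in> {k. odd k} \<inter> {1..n}"
    then show "x \<in> (\<lambda>k. 2 * k - 1) ` {1..n}"
      by (auto elim!: oddE intro!: image_eqI[of _ _ "x div 2 + 1"])
  qed
  then have "weight_gf Do weight $ n = (\<Prod>j\<in>(\<lambda>k. 2 * k - 1) ` {1..n}. 1 + fps_X ^ j) $ n"
    unfolding Do_eq_distinct_partitions by (intro weight_gf_distinct_partitions_nth) auto
  also have "\<dots> = (\<Prod>k\<in>{1..n}. 1 + fps_X ^ (2 * k - 1)) $ n"
    by (subst prod.reindex) (auto simp: inj_on_def)
  finally show "weight_gf Do weight $ n = odd_plus_prod 1 $ n"
    by (simp add: odd_plus_prod_def fps_infprod_def)
qed

section \<open>The finite Jacobi triple product\<close>

text \<open>Gaussian binomial coefficients in the base \<open>q\<^sup>2\<close>, with \<open>q = fps_X\<close>; \<open>qfact j\<close> is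
  \<open>(q\<^sup>2; q\<^sup>2)\<^sub>j\<close>.\<close>

fun qbinom :: "nat \<Rightarrow> nat \<Rightarrow> 'a::comm_ring_1 fps" where
  "qbinom 0 k = (if k = 0 then 1 else 0)"
| "qbinom (Suc n) k = (if k = 0 then 1 else fps_X ^ (2 * k) * qbinom n k + qbinom n (k - 1))"

definition qfact :: "nat \<Rightarrow> 'a::comm_ring_1 fps" where
  "qfact j = (\<Prod>i\<in>{1..j}. 1 - fps_X ^ (2 * i))"

lemma qbinom_eq_0: "n < k \<Longrightarrow> qbinom n k = 0"
  by (induction n arbitrary: k) auto

lemma qbinom_0_right [simp]: "qbinom n 0 = 1"
  by (cases n) auto

lemma qbinom_diag [simp]: "qbinom n n = 1"
  by (induction n) (auto simp: qbinom_eq_0)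

lemma qfact_0 [simp]: "qfact 0 = 1"
  by (simp add: qfact_def)

lemma qfact_Suc: "qfact (Suc j) = qfact j * (1 - fps_X ^ (2 * Suc j))"
  by (simp add: qfact_def atLeastAtMostSuc_conv mult.commute)

lemma qfact_nth_0 [simp]: "qfact j $ 0 = 1"
  by (induction j) (auto simp: qfact_Suc)

lemma qbinom_mult_qfact: "k \<le> n \<Longrightarrow> qbinom n k * qfact k * qfact (n - k) = qfact n"
proof (induction n arbitrary: k)
  case (Suc n)
  consider "k = 0" | "k = Suc n" | j where "k = Suc j" "j < n"
    using Suc.prems by (cases k) (auto simp: le_less)
  then show ?case
  proof cases
    case 3
    have IH1: "qbinom n (Suc j) * qfact (Suc j) * qfact (n - Suc j) = (qfact n :: 'a fps)"
      using Suc.IH[of "Suc j"] \<open>j < n\<close> by simp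
    have IH0: "qbinom n j * qfact j * qfact (n - j) = (qfact n :: 'a fps)"
      using Suc.IH[of j] \<open>j < n\<close> by simp
    have nj: "n - j = Suc (n - Suc j)" and e: "2 * Suc j + 2 * Suc (n - Suc j) = 2 * Suc n"
      using \<open>j < n\<close> by auto
    have "qbinom (Suc n) k * qfact k * qfact (Suc n - k) = (
        (fps_X ^ (2 * Suc j) * qbinom n (Suc j) + qbinom n j) *
          (qfact j * (1 - fps_X ^ (2 * Suc j))) * qfact (n - j) :: 'a fps)"
      using \<open>k = Suc j\<close> by (simp add: qfact_Suc)
    also have "\<dots> = fps_X ^ (2 * Suc j) * (qbinom n (Suc j) * qfact (Suc j) * qfact (n - Suc j)) *
          (1 - fps_X ^ (2 * Suc (n - Suc j))) +
        (qbinom n j * qfact j * qfact (n - j)) * (1 - fps_X ^ (2 * Suc j))"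
      unfolding nj qfact_Suc by (simp add: algebra_simps)
    also have "\<dots> = qfact n * (1 - fps_X ^ (2 * Suc j) * fps_X ^ (2 * Suc (n - Suc j)))"
      \<comment> \<open>\<open>q\<^bsup>2(j+1)\<^esup> (1 - q\<^bsup>2(n-j)\<^esup>) + (1 - q\<^bsup>2(j+1)\<^esup>) = 1 - q\<^bsup>2(n+1)\<^esup>\<close>\<close>
      unfolding IH1 IH0 by (simp add: algebra_simps)
    also have "\<dots> = qfact (Suc n)"
      unfolding power_add[symmetric] e qfact_Suc ..
    finally show ?thesis .
  qed (auto simp: qbinom_eq_0)
qed simp

lemma X_power_mult_power_X_square:
  fixes z :: "'a::comm_ring_1 fps"
  shows "fps_X ^ (k * (k - 1)) * (z * fps_X\<^sup>2) ^ k = z ^ k * fps_X ^ (k * (k + 1))"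
proof -
  have "(z * fps_X\<^sup>2) ^ k = z ^ k * fps_X ^ (2 * k)"
    by (simp only: power_mult_distrib power_mult)
  then have "fps_X ^ (k * (k - 1)) * (z * fps_X\<^sup>2) ^ k = z ^ k * (fps_X ^ (k * (k - 1)) * fps_X ^ (2 * k))"
    by (simp only: mult.left_commute)
  also have "k * (k - 1) + 2 * k = k * (k + 1)"
    by (cases k) auto
  then have "fps_X ^ (k * (k - 1)) * fps_X ^ (2 * k) = (fps_X ^ (k * (k + 1)) :: 'a fps)"
    by (simp only: power_add[symmetric])
  finally show ?thesis .
qed

text \<open>Pascal's recursion for \<open>qbinom\<close> splits the sum for \<open>n + 1\<close> into \<open>w\<close> times and \<open>z\<close> times
  the sum for \<open>n\<close> with \<open>z\<close> replaced by \<open>z q\<^sup>2\<close>.\<close>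

lemma qbinom_sum_Suc:
  fixes w z :: "'a::comm_ring_1 fps"
  shows "(\<Sum>k\<le>Suc n. qbinom (Suc n) k * fps_X ^ (k * (k - 1)) * z ^ k * w ^ (Suc n - k)) =
    (w + z) * (\<Sum>k\<le>n. qbinom n k * fps_X ^ (k * (k - 1)) * (z * fps_X\<^sup>2) ^ k * w ^ (n - k))"
proof -
  define A where "A k = qbinom n k * fps_X ^ (k * (k + 1)) * z ^ k * w ^ (n - k)" for k
  have exp: "k * (k - 1) + 2 * k = k * (k + 1)" for k :: nat
    by (cases k) auto
  have "qbinom n k * fps_X ^ (k * (k - 1)) * (z * fps_X\<^sup>2) ^ k * w ^ (n - k) = A k" for k
  proof -
    have "qbinom n k * fps_X ^ (k * (k - 1)) * (z * fps_X\<^sup>2) ^ k * w ^ (n - k) =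
        qbinom n k * (fps_X ^ (k * (k - 1)) * (z * fps_X\<^sup>2) ^ k) * w ^ (n - k)"
      by (simp only: mult.assoc)
    then show ?thesis by (simp only: X_power_mult_power_X_square A_def mult_ac)
  qed
  then have shifted: "(\<Sum>k\<le>n. qbinom n k * fps_X ^ (k * (k - 1)) * (z * fps_X\<^sup>2) ^ k * w ^ (n - k)) =
      (\<Sum>k\<le>n. A k)"
    by simp
  have split: "(\<Sum>k\<le>Suc n. qbinom (Suc n) k * fps_X ^ (k * (k - 1)) * z ^ k * w ^ (Suc n - k)) =
      (\<Sum>k\<le>Suc n. qbinom n k * fps_X ^ (k * (k + 1)) * z ^ k * w ^ (Suc n - k)) +
      (\<Sum>k\<le>Suc n. if k = 0 then 0
         else qbinom n (k - 1) * fps_X ^ (k * (k - 1)) * z ^ k * w ^ (Suc n - k))"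
    by (subst sum.distrib[symmetric], intro sum.cong refl)
      (auto simp: algebra_simps power_add[symmetric] exp[simplified])
  have first: "(\<Sum>k\<le>Suc n. qbinom n k * fps_X ^ (k * (k + 1)) * z ^ k * w ^ (Suc n - k)) =
      w * (\<Sum>k\<le>n. A k)"
    unfolding sum_distrib_left
    by (simp add: qbinom_eq_0, intro sum.cong refl) (simp add: A_def Suc_diff_le algebra_simps)
  have second: "(\<Sum>k\<le>Suc n. if k = 0 then 0
         else qbinom n (k - 1) * fps_X ^ (k * (k - 1)) * z ^ k * w ^ (Suc n - k)) =
      z * (\<Sum>k\<le>n. A k)"
    by (subst sum.atMost_Suc_shift) (simp add: sum_distrib_left A_def algebra_simps)
  show ?thesis
    unfolding split first second shifted by (simp add: algebra_simps)
qed

theorem qbinomial_theorem: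
  fixes w z :: "'a::comm_ring_1 fps"
  shows "(\<Prod>i<n. w + z * fps_X ^ (2 * i)) =
    (\<Sum>k\<le>n. qbinom n k * fps_X ^ (k * (k - 1)) * z ^ k * w ^ (n - k))"
proof (induction n arbitrary: z)
  case (Suc n)
  have "fps_X ^ (2 * Suc i) = fps_X\<^sup>2 * (fps_X ^ (2 * i) :: 'a fps)" for i
    by (simp add: power_add[symmetric])
  then have "(\<Prod>i<Suc n. w + z * fps_X ^ (2 * i)) =
      (w + z) * (\<Prod>i<n. w + (z * fps_X\<^sup>2) * fps_X ^ (2 * i))"
    by (simp only: prod.lessThan_Suc_shift mult_0_right power_0 mult_1_right mult.assoc)
  then show ?case by (simp only: Suc qbinom_sum_Suc)
qed simp

text \<open>\<open>parity_pow s j\<close> is \<open>s\<^sup>j\<close> when \<open>s\<^sup>2 = 1\<close>, and makes sense for negative \<open>j\<close>.\<close>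

definition parity_pow :: "'a::one \<Rightarrow> int \<Rightarrow> 'a" where
  "parity_pow s j = (if even j then 1 else s)"

lemma power_eq_parity_pow:
  fixes s :: "'a::monoid_mult"
  assumes "s * s = 1"
  shows "s ^ n = parity_pow s (int n)"
proof -
  obtain m where "n = 2 * m \<or> n = 2 * m + 1"
    by (metis evenE oddE)
  then show ?thesis
    using assms by (auto simp: parity_pow_def power_mult power2_eq_square)
qed

lemma triple_product_lower_factors:
  fixes c :: "'a::comm_ring_1 fps"
  assumes "c * c = 1"
  shows "(\<Prod>i<N. fps_X ^ (2 * N - 1) + c * fps_X ^ (2 * i)) =
    c ^ N * fps_X ^ (N * (N - 1)) * (\<Prod>k\<in>{1..N}. 1 + c * fps_X ^ (2 * k - 1))"
proof -
  have "(\<Prod>i<N. fps_X ^ (2 * N - 1) + c * fps_X ^ (2 * i)) =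
      (\<Prod>i<N. (c * fps_X ^ (2 * i)) * (1 + c * fps_X ^ (2 * N - 1 - 2 * i)))"
  proof (rule prod.cong[OF refl])
    fix i assume "i \<in> {..<N}"
    then have X: "fps_X ^ (2 * N - 1) = fps_X ^ (2 * i) * (fps_X ^ (2 * N - 1 - 2 * i) :: 'a fps)"
      by (simp flip: power_add)
    have "(c * fps_X ^ (2 * i)) * (1 + c * fps_X ^ (2 * N - 1 - 2 * i)) =
        c * fps_X ^ (2 * i) + (c * c) * (fps_X ^ (2 * i) * fps_X ^ (2 * N - 1 - 2 * i))"
      by (simp add: algebra_simps)
    then show "fps_X ^ (2 * N - 1) + c * fps_X ^ (2 * i) =
        (c * fps_X ^ (2 * i)) * (1 + c * fps_X ^ (2 * N - 1 - 2 * i))"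
      using assms X by (simp add: add.commute)
  qed
  also have "\<dots> = c ^ N * fps_X ^ (\<Sum>i<N. 2 * i) * (\<Prod>i<N. 1 + c * fps_X ^ (2 * N - 1 - 2 * i))"
    by (simp add: prod.distrib power_sum)
  also have "(\<Sum>i<N. 2 * i) = N * (N - 1)"
    by (induction N) (auto simp: algebra_simps)
  also have "(\<Prod>i<N. 1 + c * fps_X ^ (2 * N - 1 - 2 * i)) = (\<Prod>k\<in>{1..N}. 1 + c * fps_X ^ (2 * k - 1))"
  proof (rule prod.reindex_bij_witness[of _ "\<lambda>k. N - k" "\<lambda>i. N - i"])
    fix i assume "i \<in> {..<N}"
    then have "2 * (N - i) - 1 = 2 * N - 1 - 2 * i" by simp
    then show "1 + c * fps_X ^ (2 * (N - i) - 1) = 1 + c * fps_X ^ (2 * N - 1 - 2 * i)"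
      by (simp only:)
  qed auto
  finally show ?thesis .
qed

lemma triple_product_upper_factors:
  fixes c :: "'a::comm_ring_1 fps"
  shows "(\<Prod>i\<in>{N..<2 * N}. fps_X ^ (2 * N - 1) + c * fps_X ^ (2 * i)) =
    fps_X ^ (N * (2 * N - 1)) * (\<Prod>k\<in>{1..N}. 1 + c * fps_X ^ (2 * k - 1))"
proof -
  have "(\<Prod>i\<in>{N..<2 * N}. fps_X ^ (2 * N - 1) + c * fps_X ^ (2 * i)) =
      (\<Prod>i\<in>{N..<2 * N}. fps_X ^ (2 * N - 1) * (1 + c * fps_X ^ (2 * i + 1 - 2 * N)))"
  proof (rule prod.cong[OF refl])
    fix i assume "i \<in> {N..<2 * N}"
    then have "fps_X ^ (2 * i) = fps_X ^ (2 * N - 1) * (fps_X ^ (2 * i + 1 - 2 * N) :: 'a fps)"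
      by (simp flip: power_add)
    then show "fps_X ^ (2 * N - 1) + c * fps_X ^ (2 * i) =
        fps_X ^ (2 * N - 1) * (1 + c * fps_X ^ (2 * i + 1 - 2 * N))"
      by (simp add: algebra_simps)
  qed
  also have "\<dots> = fps_X ^ (N * (2 * N - 1)) * (\<Prod>i\<in>{N..<2 * N}. 1 + c * fps_X ^ (2 * i + 1 - 2 * N))"
    by (simp add: prod.distrib power_mult[symmetric] mult.commute)
  also have "(\<Prod>i\<in>{N..<2 * N}. 1 + c * fps_X ^ (2 * i + 1 - 2 * N)) =
      (\<Prod>k\<in>{1..N}. 1 + c * fps_X ^ (2 * k - 1))"
  proof (rule prod.reindex_bij_witness[of _ "\<lambda>k. k + N - 1" "\<lambda>i. i + 1 - N"])
    fix i assume "i \<in> {N..<2 * N}"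
    then have "2 * (i + 1 - N) - 1 = 2 * i + 1 - 2 * N" by simp
    then show "1 + c * fps_X ^ (2 * (i + 1 - N) - 1) = 1 + c * fps_X ^ (2 * i + 1 - 2 * N)"
      by (simp only:)
  qed auto
  finally show ?thesis .
qed

lemma triple_product_exponent:
  assumes "k \<le> 2 * N"
  shows "k * (k - 1) + (2 * N - 1) * (2 * N - k) =
    N * (N - 1) + N * (2 * N - 1) + nat ((int k - int N)\<^sup>2)"
proof -
  have k1: "int (k * (k - 1)) = int k * (int k - 1)"
    by (cases k) (simp_all add: algebra_simps)
  have N1: "int (N * (N - 1)) = int N * (int N - 1)"
    and N2: "int (N * (2 * N - 1)) = int N * (2 * int N - 1)"
    by (cases N; simp add: algebra_simps)+
  have kN: "int ((2 * N - 1) * (2 * N - k)) = (2 * int N - 1) * (2 * int N - int k)"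
  proof (cases "N = 0")
    case False
    then have "int (2 * N - 1) = 2 * int N - 1" "int (2 * N - k) = 2 * int N - int k"
      using assms by auto
    then show ?thesis by (simp only: of_nat_mult)
  qed (use assms in simp)
  have "int (k * (k - 1) + (2 * N - 1) * (2 * N - k)) =
      int (N * (N - 1) + N * (2 * N - 1) + nat ((int k - int N)\<^sup>2))"
    unfolding of_nat_add k1 kN N1 N2 of_nat_nat[OF zero_le_power2] by (simp add: algebra_simps power2_eq_square)
  then show ?thesis by (simp only: of_nat_eq_iff)
qed

lemma triple_product_factors:
  fixes c :: "'a::comm_ring_1 fps"
  assumes "c * c = 1"
  shows "(\<Prod>i<2 * N. fps_X ^ (2 * N - 1) + c * fps_X ^ (2 * i)) =
    c ^ N * (\<Prod>k\<in>{1..N}. 1 + c * fps_X ^ (2 * k - 1))\<^sup>2 * fps_X ^ (N * (N - 1) + N * (2 * N - 1))"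
proof -
  have "{..<2 * N} = {..<N} \<union> {N..<2 * N}" by auto
  then have "(\<Prod>i<2 * N. fps_X ^ (2 * N - 1) + c * fps_X ^ (2 * i)) =
      (\<Prod>i<N. fps_X ^ (2 * N - 1) + c * fps_X ^ (2 * i)) *
      (\<Prod>i\<in>{N..<2 * N}. fps_X ^ (2 * N - 1) + c * fps_X ^ (2 * i))"
    by (simp add: prod.union_disjoint ivl_disj_int)
  also have "\<dots> = (c ^ N * fps_X ^ (N * (N - 1)) * (\<Prod>k\<in>{1..N}. 1 + c * fps_X ^ (2 * k - 1))) *
      (fps_X ^ (N * (2 * N - 1)) * (\<Prod>k\<in>{1..N}. 1 + c * fps_X ^ (2 * k - 1)))"
    by (simp only: triple_product_lower_factors[OF assms] triple_product_upper_factors)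
  finally show ?thesis
    by (simp add: power_add power2_eq_square mult_ac)
qed

lemma triple_product_qbinomial_sum:
  fixes c :: "'a::comm_ring_1 fps"
  shows "(\<Sum>k\<le>2 * N. qbinom (2 * N) k * fps_X ^ (k * (k - 1)) * c ^ k * (fps_X ^ (2 * N - 1)) ^ (2 * N - k)) =
    (\<Sum>k\<le>2 * N. qbinom (2 * N) k * c ^ k * fps_X ^ nat ((int k - int N)\<^sup>2)) *
      fps_X ^ (N * (N - 1) + N * (2 * N - 1))"
  unfolding sum_distrib_right
proof (rule sum.cong[OF refl])
  fix k assume "k \<in> {..2 * N}"
  then have X: "fps_X ^ (k * (k - 1)) * (fps_X ^ (2 * N - 1)) ^ (2 * N - k) =
      (fps_X ^ nat ((int k - int N)\<^sup>2) * fps_X ^ (N * (N - 1) + N * (2 * N - 1)) :: 'a fps)"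
    by (simp only: power_mult[symmetric] power_add[symmetric] triple_product_exponent
        atMost_iff add.commute)
  have "qbinom (2 * N) k * fps_X ^ (k * (k - 1)) * c ^ k * (fps_X ^ (2 * N - 1)) ^ (2 * N - k) =
      qbinom (2 * N) k * c ^ k * (fps_X ^ (k * (k - 1)) * (fps_X ^ (2 * N - 1)) ^ (2 * N - k))"
    by (simp only: mult_ac)
  then show "qbinom (2 * N) k * fps_X ^ (k * (k - 1)) * c ^ k * (fps_X ^ (2 * N - 1)) ^ (2 * N - k) =
      qbinom (2 * N) k * c ^ k * fps_X ^ nat ((int k - int N)\<^sup>2) * fps_X ^ (N * (N - 1) + N * (2 * N - 1))"
    by (simp only: X mult.assoc)
qed

text \<open>Apply the \<open>q\<close>-binomial theorem with \<open>w = q\<^bsup>2N-1\<^esup>\<close> and \<open>z = s\<close>: up to monomials, its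
  first \<open>N\<close> and its last \<open>N\<close> factors each reproduce the product on the left.\<close>

theorem finite_triple_product:
  fixes s :: "'a::comm_ring_1"
  assumes s: "s * s = 1"
  shows "(\<Prod>k\<in>{1..N}. 1 + fps_const s * fps_X ^ (2 * k - 1))\<^sup>2 =
    (\<Sum>k\<le>2 * N. qbinom (2 * N) k * fps_const (parity_pow s (int k - int N)) *
      fps_X ^ nat ((int k - int N)\<^sup>2))"
proof -
  define c where "c = fps_const s"
  have cc: "c * c = 1" unfolding c_def fps_const_mult s by simp
  define S where "S = (\<Sum>k\<le>2 * N. qbinom (2 * N) k * c ^ k * fps_X ^ nat ((int k - int N)\<^sup>2))"
  define P where "P = (\<Prod>k\<in>{1..N}. 1 + c * fps_X ^ (2 * k - 1))"
  have "c ^ N * P\<^sup>2 * fps_X ^ (N * (N - 1) + N * (2 * N - 1)) = S * fps_X ^ (N * (N - 1) + N * (2 * N - 1))"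
    using qbinomial_theorem[of "fps_X ^ (2 * N - 1)" c "2 * N"]
    unfolding triple_product_factors[OF cc] triple_product_qbinomial_sum S_def P_def .
  then have cP: "c ^ N * P\<^sup>2 = S"
    by (metis fps_shift_times_fps_X_power')
  have "c ^ N * c ^ N = 1"
    using cc by (metis power_mult_distrib power_one)
  then have "P\<^sup>2 = (c ^ N * c ^ N) * P\<^sup>2" by simp
  also have "\<dots> = c ^ N * S"
    by (simp only: mult.assoc cP)
  also have "\<dots> = (\<Sum>k\<le>2 * N. qbinom (2 * N) k * fps_const (parity_pow s (int k - int N)) *
      fps_X ^ nat ((int k - int N)\<^sup>2))"
    unfolding S_def sum_distrib_left
  proof (rule sum.cong[OF refl])
    fix k
    have sign: "c ^ N * c ^ k = fps_const (parity_pow s (int k - int N))"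
      using power_eq_parity_pow[OF s, of "k + N"]
      by (simp add: c_def power_add fps_const_power mult.commute parity_pow_def)
    have "c ^ N * (qbinom (2 * N) k * c ^ k * fps_X ^ nat ((int k - int N)\<^sup>2)) =
        qbinom (2 * N) k * (c ^ N * c ^ k) * fps_X ^ nat ((int k - int N)\<^sup>2)"
      by (simp only: mult_ac)
    then show "c ^ N * (qbinom (2 * N) k * c ^ k * fps_X ^ nat ((int k - int N)\<^sup>2)) =
        qbinom (2 * N) k * fps_const (parity_pow s (int k - int N)) * fps_X ^ nat ((int k - int N)\<^sup>2)"
      by (simp only: sign)
  qed
  finally show ?thesis unfolding P_def c_def .
qed

section \<open>Gauss's identity\<close>

lemma f_fps_eq_upto: "0 < i \<Longrightarrow> m \<le> N \<Longrightarrow> fps_eq_upto m (f_fps i) (\<Prod>k\<in>{1..N}. 1 - fps_X ^ (i * k))"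
  unfolding f_fps_def fps_infprod_def[symmetric]
proof (rule fps_infprod_eq_upto)
  fix k :: nat assume "0 < i" "0 < k"
  then have "k \<le> i * k" by simp
  then have "k - 1 < i * k" using \<open>0 < k\<close> by linarith
  then show "fps_eq_upto (k - 1) (1 - fps_X ^ (i * k)) (1 :: rat fps)"
    using fps_eq_upto_one_plus_X_power[of "k - 1" "i * k" "-1"] by simp
qed

lemma f_fps_nth_0 [simp]: "f_fps i $ 0 = 1"
  by (simp add: f_fps_def)

lemma f_fps_eq_upto_qfact: "m \<le> j \<Longrightarrow> fps_eq_upto m (f_fps 2) (qfact j)"
  unfolding qfact_def by (rule f_fps_eq_upto) auto

lemma qbinom_eq_upto_inverse_f_fps:
  assumes "m \<le> k" "m \<le> n - k" "k \<le> n"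
  shows "fps_eq_upto m (qbinom n k) (inverse (f_fps 2))"
proof -
  have "qbinom n k * (qfact k * qfact (n - k)) = (qfact n :: rat fps)"
    using qbinom_mult_qfact[OF assms(3)] by (simp add: mult.assoc)
  moreover have "(qfact k * qfact (n - k) :: rat fps) $ 0 \<noteq> 0" by simp
  ultimately have "qbinom n k = qfact n * inverse (qfact k * qfact (n - k) :: rat fps)"
    by (metis inverse_mult_eq_1' mult.assoc mult.right_neutral)
  moreover have "fps_eq_upto m (qfact n * inverse (qfact k * qfact (n - k)))
      (f_fps 2 * inverse (f_fps 2 * f_fps 2))"
    using assms
    by (intro fps_eq_upto_mult fps_eq_upto_inverse fps_eq_upto_sym[OF f_fps_eq_upto_qfact]) auto
  moreover have "f_fps 2 * inverse (f_fps 2 * f_fps 2) = inverse (f_fps 2)"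
    by (simp add: fps_inverse_mult mult.assoc[symmetric] inverse_mult_eq_1')
  ultimately show ?thesis by simp
qed

text \<open>\<open>theta s = \<Sum>\<^bsub>j\<in>\<int>\<^esub> s\<^sup>j q\<^bsup>j\<^sup>2\<^esup>\<close>; for \<open>s = 1\<close> and \<open>s = -1\<close> these are
  \<open>\<phi>(q)\<close> and \<open>\<phi>(-q)\<close> in Ramanujan's notation.\<close>

definition theta :: "'a::comm_ring_1 \<Rightarrow> 'a fps" where
  "theta s = Abs_fps (\<lambda>n. \<Sum>j\<in>{j::int. j * j = int n}. parity_pow s j)"

lemma theta_nth_0 [simp]: "theta s $ 0 = 1"
proof -
  have "{j::int. j * j = 0} = {0}" by auto
  then show ?thesis by (simp add: theta_def parity_pow_def)
qed

lemma abs_le_mult_self: "\<bar>j::int\<bar> \<le> j * j"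
proof (cases "j = 0")
  case False
  then have "\<bar>j\<bar> * 1 \<le> \<bar>j\<bar> * \<bar>j\<bar>" by (intro mult_left_mono) auto
  then show ?thesis by (simp add: abs_mult_self_eq)
qed simp

lemma theta_nth_eq_finite_sum:
  assumes "n \<le> N"
  shows "(\<Sum>k\<le>2 * N. fps_const (parity_pow s (int k - int N)) * fps_X ^ nat ((int k - int N)\<^sup>2)) $ n =
    theta s $ n"
proof -
  have "(\<Sum>k\<le>2 * N. fps_const (parity_pow s (int k - int N)) * fps_X ^ nat ((int k - int N)\<^sup>2)) $ n =
      (\<Sum>k\<le>2 * N. if n = nat ((int k - int N)\<^sup>2) then parity_pow s (int k - int N) else 0)"
    by (auto simp: fps_sum_nth intro!: sum.cong)
  also have "\<dots> = (\<Sum>k\<in>{k\<in>{..2 * N}. n = nat ((int k - int N)\<^sup>2)}. parity_pow s (int k - int N))"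
    by (rule sum.inter_filter[symmetric]) simp
  also have "\<dots> = (\<Sum>j\<in>{j::int. j * j = int n}. parity_pow s j)"
  proof (rule sum.reindex_bij_witness[of _ "\<lambda>j. nat (j + int N)" "\<lambda>k. int k - int N"])
    fix j assume j: "j \<in> {j::int. j * j = int n}"
    then have "\<bar>j\<bar> \<le> int N" using abs_le_mult_self[of j] assms by auto
    then show "int (nat (j + int N)) - int N = j"
      and "nat (j + int N) \<in> {k \<in> {..2 * N}. n = nat ((int k - int N)\<^sup>2)}"
      using j by (auto simp: power2_eq_square)
  qed (auto simp: power2_eq_square)
  finally show ?thesis by (simp add: theta_def)
qed

lemma qbinom_mult_eq_upto_inverse_f_fps:
  assumes "k \<le> 2 * N" "2 * m \<le> N"
  shows "fps_eq_upto m (qbinom (2 * N) k * (a * fps_X ^ nat ((int k - int N)\<^sup>2)))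
    (inverse (f_fps 2) * (a * fps_X ^ nat ((int k - int N)\<^sup>2)))"
proof (cases "nat ((int k - int N)\<^sup>2) \<le> m")
  case True
  then have "\<bar>int k - int N\<bar> \<le> int m"
    using abs_le_mult_self[of "int k - int N"] by (simp add: power2_eq_square)
  then have "fps_eq_upto m (qbinom (2 * N) k) (inverse (f_fps 2))"
    using assms by (intro qbinom_eq_upto_inverse_f_fps) auto
  then show ?thesis by (rule fps_eq_upto_mult) simp
next
  case False
  then have "fps_eq_upto m (fps_X ^ nat ((int k - int N)\<^sup>2) * A) 0" for A :: "rat fps"
    by (intro fps_eq_upto_X_power_mult) auto
  from this[of "qbinom (2 * N) k * a"] this[of "inverse (f_fps 2) * a"] show ?thesis
    by (auto simp: mult_ac intro: fps_eq_upto_trans fps_eq_upto_sym)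
qed

text \<open>Let \<open>N \<rightarrow> \<infinity>\<close> in the finite triple product. The terms with \<open>(k - N)\<^sup>2 \<le> m\<close> have \<open>k\<close>
  and \<open>2N - k\<close> large, so their Gaussian binomial agrees with \<open>1 / f\<^sub>2\<close> up to degree \<open>m\<close>; all
  other terms vanish up to degree \<open>m\<close>.\<close>

theorem f_fps_mult_odd_plus_prod_square:
  fixes s :: rat
  assumes "s * s = 1"
  shows "f_fps 2 * odd_plus_prod s ^ 2 = theta s"
proof (rule fps_eq_upto_imp_eq)
  fix m :: nat
  define N where "N = 2 * m + 1"
  have "m \<le> N" by (simp add: N_def)
  define T where "T k = fps_const (parity_pow s (int k - int N)) * fps_X ^ nat ((int k - int N)\<^sup>2)"
    for k
  have "fps_eq_upto m (odd_plus_prod s ^ 2) ((\<Prod>k\<in>{1..N}. 1 + fps_const s * fps_X ^ (2 * k - 1))\<^sup>2)"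
    by (intro fps_eq_upto_power odd_plus_prod_eq_upto) (simp add: N_def)
  also have "(\<Prod>k\<in>{1..N}. 1 + fps_const s * fps_X ^ (2 * k - 1))\<^sup>2 = (\<Sum>k\<le>2 * N. qbinom (2 * N) k * T k)"
    unfolding finite_triple_product[OF assms] T_def by (simp add: mult.assoc)
  finally have "fps_eq_upto m (odd_plus_prod s ^ 2) (\<Sum>k\<le>2 * N. qbinom (2 * N) k * T k)" .
  moreover have "fps_eq_upto m (\<Sum>k\<le>2 * N. qbinom (2 * N) k * T k) (\<Sum>k\<le>2 * N. inverse (f_fps 2) * T k)"
    unfolding T_def
    by (intro fps_eq_upto_sum qbinom_mult_eq_upto_inverse_f_fps) (auto simp: N_def)
  moreover have "fps_eq_upto m (\<Sum>k\<le>2 * N. T k) (theta s)"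
    using theta_nth_eq_finite_sum[of _ N s] \<open>m \<le> N\<close> by (auto simp: fps_eq_upto_def T_def)
  ultimately have "fps_eq_upto m (odd_plus_prod s ^ 2) (inverse (f_fps 2) * theta s)"
    unfolding sum_distrib_left[symmetric]
    by (meson fps_eq_upto_trans fps_eq_upto_mult fps_eq_upto_refl)
  then have "fps_eq_upto m (f_fps 2 * odd_plus_prod s ^ 2) (f_fps 2 * (inverse (f_fps 2) * theta s))"
    by (intro fps_eq_upto_mult) auto
  then show "fps_eq_upto m (f_fps 2 * odd_plus_prod s ^ 2) (theta s)"
    by (simp add: mult.assoc[symmetric] inverse_mult_eq_1')
qed

section \<open>Sums of two squares\<close>

definition two_squares :: "nat \<Rightarrow> (int \<times> int) set" where
  "two_squares n = {(a, b). a * a + b * b = int n}"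

lemma finite_two_squares: "finite (two_squares n)"
proof (rule finite_subset)
  show "two_squares n \<subseteq> {-int n..int n} \<times> {-int n..int n}"
  proof
    fix p assume "p \<in> two_squares n"
    then obtain a b where p: "p = (a, b)" "a * a + b * b = int n" by (auto simp: two_squares_def)
    moreover have "a * a \<ge> 0" "b * b \<ge> 0" by auto
    ultimately have "\<bar>a\<bar> \<le> int n" "\<bar>b\<bar> \<le> int n"
      using abs_le_mult_self[of a] abs_le_mult_self[of b] by linarith+
    then show "p \<in> {-int n..int n} \<times> {-int n..int n}" using p by auto
  qed
qed simp

lemma theta_mult_theta_nth:
  "(theta s * theta t) $ n = (\<Sum>(a, b)\<in>two_squares n. parity_pow s a * parity_pow t b)"
proof -
  define A where "A i = {j::int. j * j = int i}" for i
  have finite_A: "finite (A i)" for i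
    using finite_two_squares[of i] by (rule finite_surj[where f = fst]) (force simp: A_def two_squares_def)
  have "(theta s * theta t) $ n = (\<Sum>i=0..n. \<Sum>p\<in>A i \<times> A (n - i). parity_pow s (fst p) * parity_pow t (snd p))"
    by (simp add: fps_mult_nth theta_def A_def sum_product sum.cartesian_product case_prod_beta)
  also have "\<dots> = (\<Sum>p\<in>(\<Union>i\<in>{0..n}. A i \<times> A (n - i)). parity_pow s (fst p) * parity_pow t (snd p))"
  proof (rule sum.UNION_disjoint[symmetric])
    show "\<forall>i\<in>{0..n}. finite (A i \<times> A (n - i))" using finite_A by simp
    show "\<forall>i\<in>{0..n}. \<forall>j\<in>{0..n}. i \<noteq> j \<longrightarrow> A i \<times> A (n - i) \<inter> A j \<times> A (n - j) = {}"
      by (auto simp: A_def)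
  qed simp
  also have "(\<Union>i\<in>{0..n}. A i \<times> A (n - i)) = two_squares n"
  proof (intro set_eqI iffI)
    fix p assume "p \<in> two_squares n"
    then obtain a b where p: "p = (a, b)" "a * a + b * b = int n" by (auto simp: two_squares_def)
    moreover have "a * a \<ge> 0" "b * b \<ge> 0" by auto
    ultimately have "a * a \<le> int n" by linarith
    then have "nat (a * a) \<le> n" by (simp add: nat_le_iff)
    then have "nat (a * a) \<in> {0..n}" "a * a = int (nat (a * a))" "b * b = int (n - nat (a * a))"
      using p \<open>a * a \<ge> 0\<close> by (auto simp: of_nat_diff)
    then show "p \<in> (\<Union>i\<in>{0..n}. A i \<times> A (n - i))" using p unfolding A_def by blast
  qed (auto simp: A_def two_squares_def)
  finally show ?thesis by (simp add: case_prod_beta)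
qed

lemma even_add_iff_two_squares:
  assumes "(a, b) \<in> two_squares n"
  shows "even (a + b) \<longleftrightarrow> even n"
proof -
  have "int n = a * a + b * b" using assms by (simp add: two_squares_def)
  then have "even (a * a + b * b) \<longleftrightarrow> even n" by (metis even_of_nat)
  then show ?thesis by auto
qed

lemma bij_betw_two_squares_double:
  "bij_betw (\<lambda>(a, b). (a + b, a - b)) (two_squares n) (two_squares (2 * n))"
proof (rule bij_betw_imageI)
  show "inj_on (\<lambda>(a, b). (a + b, a - b)) (two_squares n)"
    by (auto simp: inj_on_def)
  show "(\<lambda>(a, b). (a + b, a - b)) ` two_squares n = two_squares (2 * n)"
  proof (intro equalityI subsetI)
    fix p assume "p \<in> two_squares (2 * n)"
    then obtain c d where p: "p = (c, d)" "c * c + d * d = 2 * int n"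
      by (auto simp: two_squares_def)
    then have "even (c + d)"
      using even_add_iff_two_squares[of c d "2 * n"] by (simp add: two_squares_def)
    then obtain u where u: "c + d = 2 * u" by blast
    define v where "v = u - d"
    have "c = u + v" "d = u - v" using u by (auto simp: v_def)
    moreover from p(2) have "u * u + v * v = int n"
      unfolding \<open>c = u + v\<close> \<open>d = u - v\<close> by (simp add: algebra_simps)
    ultimately show "p \<in> (\<lambda>(a, b). (a + b, a - b)) ` two_squares n"
      using p(1) by (auto simp: two_squares_def intro!: image_eqI[of _ _ "(u, v)"])
  qed (auto simp: two_squares_def algebra_simps)
qed

lemma fps_even_part_theta_square: "fps_even_part (theta 1 * theta 1) = (theta 1 * theta (1::rat))"
  using bij_betw_same_card[OF bij_betw_two_squares_double]
  by (simp add: fps_eq_iff fps_even_part_def theta_mult_theta_nth parity_pow_def case_prod_beta)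

text \<open>For odd \<open>n\<close> the swap \<open>(a, b) \<mapsto> (b, a)\<close> of the representations \<open>n = a\<^sup>2 + b\<^sup>2\<close>
  reverses the sign \<open>(-1)\<^sup>b\<close>, since \<open>a + b\<close> is odd.\<close>

lemma sum_two_squares_sign_odd:
  assumes "odd n"
  shows "(\<Sum>p\<in>two_squares n. parity_pow (-1::rat) (snd p)) = 0"
proof -
  have "(\<Sum>p\<in>two_squares n. parity_pow (-1::rat) (snd p)) = (\<Sum>p\<in>two_squares n. parity_pow (-1) (fst p))"
    by (rule sum.reindex_bij_witness[of _ prod.swap prod.swap]) (auto simp: two_squares_def add.commute)
  also have "\<dots> = (\<Sum>p\<in>two_squares n. - parity_pow (-1) (snd p))"
    using assms by (intro sum.cong) (auto simp: parity_pow_def dest!: even_add_iff_two_squares)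
  finally show ?thesis by (simp add: sum_negf)
qed

lemma theta_mult_theta_neg: "theta 1 * theta (-1) = fps_dilate2 (theta (-1) * theta (-1::rat))"
proof (rule fps_ext)
  fix n
  have "(theta 1 * theta (-1)) $ n = (\<Sum>p\<in>two_squares n. parity_pow (-1::rat) (snd p))"
    by (simp add: theta_mult_theta_nth case_prod_beta parity_pow_def[of 1])
  also have "\<dots> = fps_dilate2 (theta (-1) * theta (-1)) $ n"
  proof (cases "even n")
    case True
    then obtain n' where n: "n = 2 * n'" by blast
    have "(\<Sum>p\<in>two_squares n. parity_pow (-1::rat) (snd p)) =
        (\<Sum>(u, v)\<in>two_squares n'. parity_pow (-1) (u - v))"
      unfolding n sum.reindex_bij_betw[OF bij_betw_two_squares_double, symmetric]
      by (simp add: case_prod_beta)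
    also have "\<dots> = (\<Sum>(u, v)\<in>two_squares n'. parity_pow (-1) u * parity_pow (-1) v)"
      by (intro sum.cong) (auto simp: parity_pow_def)
    finally show ?thesis
      by (simp add: n fps_dilate2_def theta_mult_theta_nth)
  qed (simp add: sum_two_squares_sign_odd fps_dilate2_def)
  finally show "(theta 1 * theta (-1)) $ n = fps_dilate2 (theta (-1) * theta (-1::rat)) $ n" .
qed

section \<open>Euler's product identities\<close>

lemma prod_odd_even_split:
  fixes g :: "nat \<Rightarrow> 'a::comm_monoid_mult"
  shows "(\<Prod>k\<in>{1..2 * N}. g k) = (\<Prod>k\<in>{1..N}. g (2 * k - 1)) * (\<Prod>k\<in>{1..N}. g (2 * k))"
proof (induction N)
  case (Suc N)
  have "{1..2 * Suc N} = insert (2 * N + 2) (insert (2 * N + 1) {1..2 * N})" by auto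
  then show ?case
    using Suc by (simp add: atLeastAtMostSuc_conv mult_ac)
qed simp

lemma odd_plus_prod_neg_eq_upto:
  assumes "m \<le> N"
  shows "fps_eq_upto m (odd_plus_prod (-1)) (\<Prod>k\<in>{1..N}. 1 - fps_X ^ (2 * k - 1))"
proof -
  have "1 + fps_const (-1) * x = 1 - x" for x :: "rat fps"
    by (simp add: fps_eq_iff)
  then show ?thesis using odd_plus_prod_eq_upto[OF assms, of "-1"] by simp
qed

lemma prod_one_plus_mult_prod_one_minus:
  fixes e :: "nat \<Rightarrow> nat"
  shows "(\<Prod>k\<in>K. 1 + fps_X ^ e k) * (\<Prod>k\<in>K. 1 - fps_X ^ e k) =
    (\<Prod>k\<in>K. 1 - fps_X ^ (2 * e k) :: 'a::comm_ring_1 fps)"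
proof -
  have "(1 + fps_X ^ e k) * (1 - fps_X ^ e k) = (1 - fps_X ^ (2 * e k) :: 'a fps)" for k
  proof -
    have "fps_X ^ (2 * e k) = fps_X ^ e k * (fps_X ^ e k :: 'a fps)"
      by (simp add: mult_2 power_add)
    then show ?thesis by (simp add: algebra_simps)
  qed
  then show ?thesis by (simp add: prod.distrib[symmetric])
qed

lemma f_fps_1_eq: "f_fps 1 = odd_plus_prod (-1) * f_fps 2"
proof (rule fps_eq_upto_imp_eq)
  fix m
  have "fps_eq_upto m (f_fps 1) (\<Prod>k\<in>{1..2 * m}. 1 - fps_X ^ (1 * k))"
    by (rule f_fps_eq_upto) auto
  also have "(\<Prod>k\<in>{1..2 * m}. 1 - fps_X ^ (1 * k)) =
      (\<Prod>k\<in>{1..m}. 1 - fps_X ^ (2 * k - 1)) * (\<Prod>k\<in>{1..m}. 1 - fps_X ^ (2 * k) :: rat fps)"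
    using prod_odd_even_split[of "\<lambda>k. 1 - fps_X ^ k :: rat fps" m] by simp
  finally have "fps_eq_upto m (f_fps 1)
      ((\<Prod>k\<in>{1..m}. 1 - fps_X ^ (2 * k - 1)) * (\<Prod>k\<in>{1..m}. 1 - fps_X ^ (2 * k)))" .
  moreover have "fps_eq_upto m (odd_plus_prod (-1) * f_fps 2)
      ((\<Prod>k\<in>{1..m}. 1 - fps_X ^ (2 * k - 1)) * (\<Prod>k\<in>{1..m}. 1 - fps_X ^ (2 * k)))"
    by (intro fps_eq_upto_mult odd_plus_prod_neg_eq_upto f_fps_eq_upto) auto
  ultimately show "fps_eq_upto m (f_fps 1) (odd_plus_prod (-1) * f_fps 2)"
    by (rule fps_eq_upto_trans[OF _ fps_eq_upto_sym])
qed

lemma odd_plus_prod_mult_odd_plus_prod_neg: "odd_plus_prod 1 * odd_plus_prod (-1) * f_fps 4 = f_fps 2"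
proof (rule fps_eq_upto_imp_eq)
  fix m
  have "fps_eq_upto m (odd_plus_prod 1 * odd_plus_prod (-1) * f_fps 4)
      ((\<Prod>k\<in>{1..m}. 1 + fps_X ^ (2 * k - 1)) * (\<Prod>k\<in>{1..m}. 1 - fps_X ^ (2 * k - 1)) *
        (\<Prod>k\<in>{1..m}. 1 - fps_X ^ (4 * k)))"
    using odd_plus_prod_eq_upto[of m m 1]
    by (intro fps_eq_upto_mult odd_plus_prod_neg_eq_upto f_fps_eq_upto) auto
  also have "(\<Prod>k\<in>{1..m}. 1 + fps_X ^ (2 * k - 1)) * (\<Prod>k\<in>{1..m}. 1 - fps_X ^ (2 * k - 1)) *
        (\<Prod>k\<in>{1..m}. 1 - fps_X ^ (4 * k)) =
      (\<Prod>k\<in>{1..m}. 1 - fps_X ^ (2 * (2 * k - 1))) * (\<Prod>k\<in>{1..m}. 1 - fps_X ^ (2 * (2 * k)) :: rat fps)"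
    unfolding prod_one_plus_mult_prod_one_minus by simp
  also have "\<dots> = (\<Prod>k\<in>{1..2 * m}. 1 - fps_X ^ (2 * k))"
    using prod_odd_even_split[of "\<lambda>k. 1 - fps_X ^ (2 * k) :: rat fps" m] by simp
  finally have "fps_eq_upto m (odd_plus_prod 1 * odd_plus_prod (-1) * f_fps 4)
      (\<Prod>k\<in>{1..2 * m}. 1 - fps_X ^ (2 * k))" .
  moreover have "fps_eq_upto m (f_fps 2) (\<Prod>k\<in>{1..2 * m}. 1 - fps_X ^ (2 * k))"
    by (rule f_fps_eq_upto) auto
  ultimately show "fps_eq_upto m (odd_plus_prod 1 * odd_plus_prod (-1) * f_fps 4) (f_fps 2)"
    by (rule fps_eq_upto_trans[OF _ fps_eq_upto_sym])
qed

lemma plus_prod_mult_f_fps_1: "plus_prod * f_fps 1 = f_fps 2"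
proof (rule fps_eq_upto_imp_eq)
  fix m
  have "fps_eq_upto m (plus_prod * f_fps 1)
      ((\<Prod>k\<in>{1..m}. 1 + fps_X ^ k) * (\<Prod>k\<in>{1..m}. 1 - fps_X ^ (1 * k)))"
    by (intro fps_eq_upto_mult plus_prod_eq_upto f_fps_eq_upto) auto
  also have "(\<Prod>k\<in>{1..m}. 1 + fps_X ^ k) * (\<Prod>k\<in>{1..m}. 1 - fps_X ^ (1 * k)) =
      (\<Prod>k\<in>{1..m}. 1 - fps_X ^ (2 * k) :: rat fps)"
    using prod_one_plus_mult_prod_one_minus[of id "{1..m}"] by simp
  finally show "fps_eq_upto m (plus_prod * f_fps 1) (f_fps 2)"
    using f_fps_eq_upto[of 2 m m] by (auto intro: fps_eq_upto_trans[OF _ fps_eq_upto_sym])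
qed

lemma plus_prod_mult_odd_plus_prod_neg: "plus_prod * odd_plus_prod (-1) = 1"
proof -
  have "(plus_prod * odd_plus_prod (-1)) * f_fps 2 = 1 * f_fps 2"
    using f_fps_1_eq plus_prod_mult_f_fps_1 by (simp add: mult.assoc)
  moreover have "f_fps 2 \<noteq> 0"
    by (metis f_fps_nth_0 fps_zero_nth zero_neq_one)
  ultimately show ?thesis by simp
qed

lemma P_seq_denominator_nth_0: "(f_fps 1 ^ 4 * f_fps 4 ^ 2) $ 0 = 1"
  by (simp add: fps_power_zeroth)

lemma P_seq_gf_mult_denominator: "Abs_fps P_seq * (f_fps 1 ^ 4 * f_fps 4 ^ 2) = f_fps 2 ^ 6"
  using P_seq_denominator_nth_0
  by (simp add: P_seq_def[abs_def] fps_nth_inverse fps_divide_unit mult.assoc inverse_mult_eq_1)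

lemma P_seq_gf_cancel:
  "A * (f_fps 1 ^ 4 * f_fps 4 ^ 2) = B * (f_fps 1 ^ 4 * f_fps 4 ^ 2) \<Longrightarrow> A = B"
  using P_seq_denominator_nth_0 by (auto simp del: fps_mult_nth_0 power_0_left)

lemma P_seq_gf_eq_products: "Abs_fps P_seq = odd_plus_prod 1 ^ 2 * plus_prod ^ 2"
proof (rule P_seq_gf_cancel[symmetric])
  have "(odd_plus_prod 1 ^ 2 * plus_prod ^ 2) * (f_fps 1 ^ 4 * f_fps 4 ^ 2) =
      (plus_prod * odd_plus_prod (-1)) ^ 2 * (odd_plus_prod 1 * odd_plus_prod (-1) * f_fps 4) ^ 2 *
        f_fps 2 ^ 4"
    unfolding f_fps_1_eq by algebra
  also have "\<dots> = f_fps 2 ^ 6"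
    by (simp add: plus_prod_mult_odd_plus_prod_neg odd_plus_prod_mult_odd_plus_prod_neg
        flip: power_add)
  finally show "(odd_plus_prod 1 ^ 2 * plus_prod ^ 2) * (f_fps 1 ^ 4 * f_fps 4 ^ 2) =
      Abs_fps P_seq * (f_fps 1 ^ 4 * f_fps 4 ^ 2)"
    by (simp only: P_seq_gf_mult_denominator)
qed

lemma P_seq_gf_mult_theta: "Abs_fps P_seq * theta (-1) = theta 1"
proof (rule P_seq_gf_cancel)
  note gauss = f_fps_mult_odd_plus_prod_square[of 1, simplified]
    f_fps_mult_odd_plus_prod_square[of "-1", simplified]
  have "Abs_fps P_seq * theta (-1) * (f_fps 1 ^ 4 * f_fps 4 ^ 2) =
      (Abs_fps P_seq * (f_fps 1 ^ 4 * f_fps 4 ^ 2)) * theta (-1)"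
    by (simp only: mult_ac)
  also have "\<dots> = f_fps 2 ^ 6 * theta (-1)"
    by (simp only: P_seq_gf_mult_denominator)
  also have "\<dots> = f_fps 2 ^ 5 * odd_plus_prod (-1) ^ 2 * (odd_plus_prod 1 * odd_plus_prod (-1) * f_fps 4) ^ 2"
    unfolding odd_plus_prod_mult_odd_plus_prod_neg gauss(2)[symmetric] by algebra
  also have "\<dots> = theta 1 * (f_fps 1 ^ 4 * f_fps 4 ^ 2)"
    unfolding f_fps_1_eq gauss(1)[symmetric] by algebra
  finally show "Abs_fps P_seq * theta (-1) * (f_fps 1 ^ 4 * f_fps 4 ^ 2) =
      theta 1 * (f_fps 1 ^ 4 * f_fps 4 ^ 2)" .
qed

lemma fps_even_part_P_seq_gf: "fps_even_part (Abs_fps P_seq) = Abs_fps P_seq ^ 2"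
proof -
  have "fps_even_part (Abs_fps P_seq) * (theta (-1) * theta (-1)) =
      fps_even_part (Abs_fps P_seq * fps_dilate2 (theta (-1) * theta (-1)))"
    by (simp only: fps_even_part_mult_dilate2)
  also have "Abs_fps P_seq * fps_dilate2 (theta (-1) * theta (-1)) = theta 1 * theta 1"
    by (metis P_seq_gf_mult_theta theta_mult_theta_neg mult.assoc mult.commute)
  also have "fps_even_part (theta 1 * theta 1) = theta 1 * theta (1::rat)"
    by (rule fps_even_part_theta_square)
  also have "\<dots> = Abs_fps P_seq ^ 2 * (theta (-1) * theta (-1))"
    unfolding P_seq_gf_mult_theta[symmetric] by algebra
  finally show ?thesis
    by (metis mult_cancel_right no_zero_divisors theta_nth_0 fps_zero_nth zero_neq_one)
qed

lemma weight4_eq: "weight4 = pair_weight weight (pair_weight weight (pair_weight weight weight))"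
  by (auto simp: weight4_def pair_weight_def split: prod.splits)

lemma weight8_eq:
  "weight8 = pair_weight weight (pair_weight weight (pair_weight weight (pair_weight weight
    (pair_weight weight (pair_weight weight (pair_weight weight weight))))))"
  by (auto simp: weight8_def pair_weight_def split: prod.splits)

lemma finite_fibres_D: "finite_fibres D weight"
  and finite_fibres_Do: "finite_fibres Do weight"
  by (simp_all add: D_eq_distinct_partitions Do_eq_distinct_partitions
      finite_fibres_distinct_partitions)

lemma weight_gf_Do_Do_D_D: "weight_gf (Do \<times> Do \<times> D \<times> D) weight4 = Abs_fps P_seq"
  and finite_fibres_Do_Do_D_D: "finite_fibres (Do \<times> Do \<times> D \<times> D) weight4"
  by (simp_all add: weight4_eq weight_gf_Times finite_fibres_Times finite_fibres_D finite_fibres_Do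
      weight_gf_D weight_gf_Do P_seq_gf_eq_products power2_eq_square mult_ac)

lemma weight_gf_Tgt: "weight_gf Tgt weight8 = Abs_fps P_seq ^ 2"
  and finite_fibres_Tgt: "finite_fibres Tgt weight8"
  unfolding Tgt_def
  by (simp_all add: weight8_eq weight_gf_Times finite_fibres_Times finite_fibres_D finite_fibres_Do
      weight_gf_D weight_gf_Do P_seq_gf_eq_products power2_eq_square mult_ac)

theorem theorem2p10:
  shows "(\<exists>\<phi>. bij_betw \<phi> Src Tgt \<and> (\<forall>t\<in>Src. 2 * weight8 (\<phi> t) = weight4 t))
         \<and> Abs_fps (\<lambda>n. P_seq (2 * n)) = (Abs_fps P_seq) ^ 2"
proof
  have Src: "Src = {t \<in> Do \<times> Do \<times> D \<times> D. even (weight4 t)}"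
    by (simp add: Src_def)
  show "\<exists>\<phi>. bij_betw \<phi> Src Tgt \<and> (\<forall>t\<in>Src. 2 * weight8 (\<phi> t) = weight4 t)"
  proof (rule weight_halving_bij_exists_if_gf)
    show "finite_fibres Src weight4"
      using finite_fibres_Do_Do_D_D by (rule finite_fibres_subset) (auto simp: Src)
    show "fps_even_part (weight_gf Src weight4) = weight_gf Tgt weight8"
      unfolding Src fps_even_part_weight_gf_even weight_gf_Do_Do_D_D weight_gf_Tgt
      by (rule fps_even_part_P_seq_gf)
  qed (auto simp: Src finite_fibres_Tgt)
  show "Abs_fps (\<lambda>n. P_seq (2 * n)) = Abs_fps P_seq ^ 2"
    using fps_even_part_P_seq_gf by (simp add: fps_even_part_def)
qed

end
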